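(* Consider the algorithm described in the context, and suppose it does not terminate finitely. Then there exists a subsequence of iterations $\mathcal K\subseteq\mathbb{N}$ such that $\lim_{k\in\mathcal K}J_k^Tc_k=0$.
   Context: Problem: $\min_{x\in\mathbb{R}^n} f(x)+r(x)$ subject to $c(x)=0$, where $f:\mathbb{R}^n\to\mathbb{R}$ and $c:\mathbb{R}^n\to\mathbb{R}^m$ ($m\le n$) are continuously differentiable and $r:\mathbb{R}^n\to\mathbb{R}_{\ge 0}$ is convex. Write $g(x)=\nabla f(x)$, $J(x)=\nabla c(x)^T$, and $f_k=f(x_k)$, $g_k=g(x_k)$, $c_k=c(x_k)$, $J_k=J(x_k)$, $r_k=r(x_k)$. All norms are Euclidean. Merit function: $\Phi_\tau(x)=\tau(f(x)+r(x))+\|c(x)\|_2$. Algorithm: inputs $x_0$, $\alpha_0>0$, $\tau_{-1}>0$; constants $\kappa_v>0$, $\sigma_c,\epsilon_\tau,\xi,\eta\in(0,1)$, $\sigma_u\in(0,1/2]$, $\bar\sigma_u:=\sigma_u+\tfrac12$. For $k=0,1,\dots$: 1. If $J_k^Tc_k\ne0$, compute $v_k$ with $v_k\in\mathrm{Range}(J_k^T)$, $\|v_k\|_2\le\kappa_v\alpha_k\|J_k^Tc_k\|_2$, $\|c_k+J_kv_k\|_2\le\|c_k+J_kv_k^c\|_2$, where $v_k^c=-\beta_k^cJ_k^Tc_k$ with $\beta_k^c$ minimizing $\tfrac12\|c_k-\beta J_kJ_k^Tc_k\|_2^2$ over $0\le\beta\le\kappa_v\alpha_k$. Otherwise set $v_k=0$,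 and if $c_k\ne0$ terminate. 2. Let $u_k$ be the unique minimizer of $g_k^Tu+\tfrac1{2\alpha_k}\|u\|_2^2+r(x_k+v_k+u)$ subject to $J_ku=0$; set $s_k=v_k+u_k$. If $s_k=0$, terminate. 3. Let $D_k:=g_k^Ts_k+\bar\sigma_u\|s_k\|_2^2/\alpha_k+r(x_k+s_k)-r_k$; $\tau_{k,\mathrm{trial}}=\infty$ if $D_k\le0$, else $\tau_{k,\mathrm{trial}}=(1-\sigma_c)(\|c_k\|_2-\|c_k+J_kv_k\|_2)/D_k$. Set $\tau_k=\tau_{k-1}$ if $\tau_{k-1}\le\tau_{k,\mathrm{trial}}$, else $\tau_k=\min\{(1-\epsilon_\tau)\tau_{k-1},\tau_{k,\mathrm{trial}}\}$. 4. With $\Delta q_k(s,\tau):=-\tau(g_k^Ts+\tfrac1{2\alpha_k}\|s\|_2^2+r(x_k+s)-r_k)+\|c_k\|_2-\|c_k+J_ks\|_2$: if $\Phi_{\tau_k}(x_k+s_k)\le\Phi_{\tau_k}(x_k)-\eta\Delta q_k(s_k,\tau_k)$ set $x_{k+1}=x_k+s_k$, $\alpha_{k+1}=\alpha_k$; else $x_{k+1}=x_k$, $\alpha_{k+1}=\xi\alpha_k$. Assumption: there is an open convex set $\mathcal X$ containing all iterates $x_k$ and trial points $x_k+s_k$ such that $f$ is bounded below on $\mathcal X$, $\nabla f$ is bounded and Lipschitz continuous on $\mathcal X$, $c$ is bounded on $\mathcal X$, $J$ is bounded and Lipschitz continuous on $\mathcal X$, and all subgradients of $r$ at points of $\mathcal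 X$ are uniformly bounded in norm. *)

theory Defs
  imports "HOL-Analysis.Analysis"
begin

definition merit :: "real \<Rightarrow> ('a \<Rightarrow> real) \<Rightarrow> ('a \<Rightarrow> real) \<Rightarrow> ('a \<Rightarrow> 'b::real_normed_vector) \<Rightarrow> 'a \<Rightarrow> real"
  where "merit tau f r c x = tau * (f x + r x) + norm (c x)"

definition model_red ::
  "(real^'n \<Rightarrow> real) \<Rightarrow> (real^'n \<Rightarrow> real^'n) \<Rightarrow> (real^'n \<Rightarrow> real) \<Rightarrow> (real^'n \<Rightarrow> real^'m)
   \<Rightarrow> (real^'n \<Rightarrow> real^'n^'m) \<Rightarrow> real^'n \<Rightarrow> real \<Rightarrow> real^'n \<Rightarrow> real \<Rightarrow> real"
  where "model_red f g r c J xk alpha s tau =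
    - tau * (g xk \<bullet> s + (1 / (2 * alpha)) * (norm s)^2 + r (xk + s) - r xk)
    + norm (c xk) - norm (c xk + J xk *v s)"

definition is_subgrad :: "(real^'n \<Rightarrow> real) \<Rightarrow> real^'n \<Rightarrow> real^'n \<Rightarrow> bool"
  where "is_subgrad r x d \<longleftrightarrow> (\<forall>y. r y \<ge> r x + d \<bullet> (y - x))"

end

theory Submission
  imports Defs
begin

text \<open>Suppose norm (J_k^T c_k) \<ge> eps for all k \<ge> k0. The normal step then reduces the linearized
  infeasibility by at least a multiple of min(alpha_k, const) * eps^2, and the merit-parameter rule
  makes the model reduction at least sigma_c times that. Since the trial step has length O(alpha_k),
  Taylor expansion shows that the actual merit decrease misses the model reduction by O(alpha_k^2),
  so steps with alpha_k below a fixed threshold are always accepted. Hence alpha_k stays bounded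
  away from 0 and the model reduction stays above some delta > 0. But then the shifted merit
  function drops by eta * delta at each accepted step while alpha_k shrinks by the factor xi at
  each rejected one, and these cannot both go on forever.\<close>

lemma norm_matrix_vector_mult_le: "norm ((A::real^'n^'m) *v x) \<le> norm A * norm x"
proof -
  have "(norm (A *v x))\<^sup>2 = (\<Sum>i\<in>UNIV. ((A *v x) $ i)\<^sup>2)"
    by (simp add: norm_vec_def L2_set_def sum_nonneg)
  also have "\<dots> \<le> (\<Sum>i\<in>UNIV. (norm (A $ i))\<^sup>2 * (norm x)\<^sup>2)"
  proof (rule sum_mono)
    fix i
    have "\<bar>(A *v x) $ i\<bar> \<le> norm (A $ i) * norm x"
      by (simp add: matrix_vector_mul_component Cauchy_Schwarz_ineq2)
    then have "\<bar>(A *v x) $ i\<bar>\<^sup>2 \<le> (norm (A $ i) * norm x)\<^sup>2"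
      by (rule power_mono) simp
    then show "((A *v x) $ i)\<^sup>2 \<le> (norm (A $ i))\<^sup>2 * (norm x)\<^sup>2"
      by (simp add: power_mult_distrib)
  qed
  also have "\<dots> = (norm A * norm x)\<^sup>2"
    by (simp add: norm_vec_def L2_set_def sum_nonneg power_mult_distrib sum_distrib_right)
  finally show ?thesis
    by (rule power2_le_imp_le) simp
qed

lemma power2_norm_transpose_mult: "(norm (transpose (A::real^'n^'m) *v y))\<^sup>2 = y \<bullet> (A *v (transpose A *v y))"
proof -
  have "transpose A *v y = y v* A"
    by (metis transpose_transpose vector_transpose_matrix)
  then show ?thesis
    by (metis dot_lmul_matrix power2_norm_eq_inner)
qed

lemma norm_transpose_mult_le: "norm (transpose (A::real^'n^'m) *v y) \<le> norm A * norm y"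
proof -
  let ?w = "transpose A *v y"
  have "(norm ?w)\<^sup>2 \<le> norm y * norm (A *v ?w)"
    using power2_norm_transpose_mult[of A y] Cauchy_Schwarz_ineq2[of y "A *v ?w"] by simp
  also have "\<dots> \<le> norm y * (norm A * norm ?w)"
    by (simp add: mult_left_mono norm_matrix_vector_mult_le)
  finally have "norm ?w * norm ?w \<le> (norm A * norm y) * norm ?w"
    by (simp add: power2_eq_square algebra_simps)
  then show ?thesis
    by (cases "norm ?w = 0") (auto simp: mult_le_cancel_right)
qed

lemma onorm_matrix_vector_mult_le: "onorm ((*v) (A::real^'n^'m)) \<le> norm A"
  by (rule onorm_le) (rule norm_matrix_vector_mult_le)

lemma onorm_inner_left_le: "onorm (\<lambda>h. (a::'a::{real_inner,perfect_space}) \<bullet> h) \<le> norm a"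
proof (rule onorm_le)
  fix h show "norm (a \<bullet> h) \<le> norm a * norm h"
    using Cauchy_Schwarz_ineq2[of a h] by simp
qed

lemma lipschitz_derivative_remainder_le:
  fixes F :: "'a::real_normed_vector \<Rightarrow> 'b::real_normed_vector"
  assumes S: "convex S" "y \<in> S" "y + s \<in> S"
    and deriv: "\<And>z. z \<in> S \<Longrightarrow> (F has_derivative F' z) (at z within S)"
    and lip: "\<And>z. z \<in> S \<Longrightarrow> onorm (F' z - F' y) \<le> L * norm (z - y)"
    and "0 \<le> L"
  shows "norm (F (y + s) - F y - F' y s) \<le> L * (norm s)\<^sup>2"
proof -
  let ?T = "closed_segment y (y + s)"
  have T: "?T \<subseteq> S"
    using S by (simp add: convex_contains_segment)
  have "norm (F (y + s) - F y - F' y (y + s - y)) \<le> norm (y + s - y) * (L * norm s)"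
  proof (rule differentiable_bound_linearization[where S = ?T])
    show "y + t *\<^sub>R (y + s - y) \<in> ?T" if "t \<in> {0..1}" for t
      using that by (auto simp: in_segment algebra_simps)
    show "(F has_derivative F' z) (at z within ?T)" if "z \<in> ?T" for z
      using deriv[of z] that T by (auto intro: has_derivative_subset)
    show "onorm (F' z - F' y) \<le> L * norm s" if "z \<in> ?T" for z
    proof -
      have "norm (z - y) \<le> norm s"
        using segment_bound(1)[OF that] by simp
      then show ?thesis
        using lip[of z] that T \<open>0 \<le> L\<close> by (meson mult_left_mono order_trans subsetD)
    qed
  qed simp
  then show ?thesis
    by (simp add: power2_eq_square mult.commute mult.left_commute)
qed

lemma convex_strict_epigraph:
  assumes "convex_on UNIV r"
  shows "convex {(y, t). r y < (t::real)}"
  unfolding convex_alt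
proof (intro ballI allI impI)
  fix z1 z2 :: "'a \<times> real" and \<mu> :: real
  assume z: "z1 \<in> {(y, t). r y < t}" "z2 \<in> {(y, t). r y < t}" and "0 \<le> \<mu> \<and> \<mu> \<le> 1"
  then have \<mu>: "0 \<le> \<mu>" "\<mu> \<le> 1" by auto
  obtain y1 t1 y2 t2 where z12: "z1 = (y1, t1)" "z2 = (y2, t2)" by force
  have t: "r y1 < t1" "r y2 < t2"
    using z z12 by auto
  have "r ((1 - \<mu>) *\<^sub>R y1 + \<mu> *\<^sub>R y2) \<le> (1 - \<mu>) * r y1 + \<mu> * r y2"
    using assms \<mu> by (intro convex_onD) auto
  also have "\<dots> < (1 - \<mu>) * t1 + \<mu> * t2"
  proof (cases "\<mu> = 1")
    case False
    with t \<mu> show ?thesis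
      by (intro add_less_le_mono mult_strict_left_mono mult_left_mono) auto
  qed (use t in simp)
  finally show "(1 - \<mu>) *\<^sub>R z1 + \<mu> *\<^sub>R z2 \<in> {(y, t). r y < t}"
    by (simp add: z12)
qed

lemma convex_on_UNIV_subgradient:
  fixes r :: "'a::euclidean_space \<Rightarrow> real"
  assumes "convex_on UNIV r"
  obtains d where "\<And>y. r x + d \<bullet> (y - x) \<le> r y"
proof -
  \<comment> \<open>Separate the strict epigraph, shifted so that (x, r x) becomes the origin, from 0.\<close>
  define S where "S = (\<lambda>z. z - (x, r x)) ` {(y, t). r y < t}"
  have "convex S"
    using convex_strict_epigraph[OF assms] by (simp add: S_def)
  moreover have "0 \<notin> S"
    by (auto simp: S_def zero_prod_def)
  ultimately obtain p q where pq: "(p, q) \<noteq> 0" and sep: "\<And>y t. r y < t \<Longrightarrow> 0 \<le> p \<bullet> (y - x) + q * (t - r x)"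
    using separating_hyperplane_set_0[of S] by (force simp: S_def)
  have "0 \<le> q"
    using sep[of x "r x + 1"] by simp
  moreover have "q \<noteq> 0"
  proof
    assume "q = 0"
    then have "p \<bullet> p \<le> 0"
      using sep[of "x - p" "r (x - p) + 1"] by simp
    with \<open>q = 0\<close> pq show False
      by (metis inner_gt_zero_iff not_le zero_prod_def)
  qed
  ultimately have "0 < q" by simp
  have "r x + (- p /\<^sub>R q) \<bullet> (y - x) \<le> r y" for y
  proof (rule ccontr)
    assume "\<not> ?thesis"
    then obtain t where "r y < t" "t < r x + (- p /\<^sub>R q) \<bullet> (y - x)"
      using dense not_le by blast
    then show False
      using sep[of y t] \<open>0 < q\<close> by (simp add: field_simps)
  qed
  then show thesis
    using that by blast
qed

lemma convex_on_diff_le_subgrad_bound: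
  fixes r :: "real^'n \<Rightarrow> real"
  assumes "convex_on UNIV r"
    and bound: "\<And>d. is_subgrad r y d \<Longrightarrow> norm d \<le> B"
  shows "r y - r z \<le> B * norm (y - z)"
proof -
  obtain d where d: "\<And>z. r y + d \<bullet> (z - y) \<le> r z"
    using convex_on_UNIV_subgradient[OF assms(1)] by blast
  then have "norm d \<le> B"
    by (intro bound) (simp add: is_subgrad_def add.commute)
  have "r y - r z \<le> d \<bullet> (y - z)"
    using d[of z] by (simp add: inner_diff_right)
  also have "\<dots> \<le> norm d * norm (y - z)"
    by (rule norm_cauchy_schwarz)
  also have "\<dots> \<le> B * norm (y - z)"
    using \<open>norm d \<le> B\<close> by (simp add: mult_right_mono)
  finally show ?thesis .
qed

lemma norm_prox_minimizer_le:
  fixes G u p :: "'a::real_inner" and r :: "'a \<Rightarrow> real"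
  assumes V: "subspace V" "u \<in> V"
    and min: "\<And>w. w \<in> V \<Longrightarrow> G \<bullet> u + (1 / (2 * a)) * (norm u)\<^sup>2 + r (p + u)
                 \<le> G \<bullet> w + (1 / (2 * a)) * (norm w)\<^sup>2 + r (p + w)"
    and "0 < a" and X: "open X" "p + u \<in> X"
    and G: "norm G \<le> Bg" and "0 \<le> Br"
    and r_diff: "\<And>y z. y \<in> X \<Longrightarrow> r y - r z \<le> Br * norm (y - z)"
  shows "norm u \<le> 2 * a * (Br + Bg)"
proof (cases "u = 0")
  case True
  have "0 \<le> Bg"
    using G norm_ge_zero order_trans by blast
  with True \<open>0 < a\<close> \<open>0 \<le> Br\<close> show ?thesis
    by simp
next
  case False
  define n where "n = norm u"
  define q where "q = 1 / (2 * a)"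
  have "0 < n" "0 < q"
    using False \<open>0 < a\<close> by (auto simp: n_def q_def)
  \<comment> \<open>Compare u with a slightly shortened step (1 - t) u that still lands in X.\<close>
  obtain e where "0 < e" and e: "ball (p + u) e \<subseteq> X"
    using X open_contains_ball by blast
  define t where "t = min 1 (e / (2 * n))"
  have t: "0 < t" "t \<le> 1" "t * n < e"
    using \<open>0 < e\<close> \<open>0 < n\<close> by (auto simp: t_def min_def field_simps)
  have short_in_X: "p + (1 - t) *\<^sub>R u \<in> X"
    using e t by (auto simp: dist_norm n_def algebra_simps)
  have "G \<bullet> u + q * n\<^sup>2 + r (p + u) \<le> (1 - t) * (G \<bullet> u) + q * ((1 - t) * n)\<^sup>2 + r (p + (1 - t) *\<^sub>R u)"
    using min[of "(1 - t) *\<^sub>R u"] subspace_scale[OF V] t by (simp add: n_def q_def)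
  moreover have "r (p + (1 - t) *\<^sub>R u) - r (p + u) \<le> Br * (t * n)"
    using r_diff[OF short_in_X, of "p + u"] t by (simp add: n_def algebra_simps)
  moreover have "- (G \<bullet> u) \<le> Bg * n"
    using norm_cauchy_schwarz[of "- G" u] G \<open>0 < n\<close> by (simp add: n_def mult_right_mono order_trans)
  then have "t * - (G \<bullet> u) \<le> t * (Bg * n)"
    using t by (intro mult_left_mono) auto
  ultimately have "t * (q * n\<^sup>2 * (2 - t)) \<le> t * ((Br + Bg) * n)"
    by (simp add: power2_eq_square algebra_simps)
  then have "q * n * n * (2 - t) \<le> (Br + Bg) * n"
    using t by (simp add: power2_eq_square)
  moreover have "q * n * n \<le> q * n * n * (2 - t)"
    using t \<open>0 < n\<close> \<open>0 < q\<close> by simp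
  ultimately have "q * n * n \<le> (Br + Bg) * n"
    by linarith
  then have "q * n \<le> Br + Bg"
    using \<open>0 < n\<close> by (rule mult_right_le_imp_le)
  then show ?thesis
    using \<open>0 < a\<close> by (simp add: n_def q_def field_simps)
qed

lemma cauchy_step_decrease:
  fixes A :: "real^'n^'m" and y :: "real^'m"
  assumes cauchy: "(norm (y - \<beta> *\<^sub>R (A *v (transpose A *v y))))\<^sup>2
                  \<le> (norm (y - b *\<^sub>R (A *v (transpose A *v y))))\<^sup>2"
    and "0 \<le> b" "b * (norm A)\<^sup>2 \<le> 1"
  shows "(norm (y - \<beta> *\<^sub>R (A *v (transpose A *v y))))\<^sup>2 \<le> (norm y)\<^sup>2 - b * (norm (transpose A *v y))\<^sup>2"
proof -
  define w where "w = transpose A *v y"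
  define z where "z = A *v w"
  have "(norm z)\<^sup>2 \<le> (norm A)\<^sup>2 * (norm w)\<^sup>2"
    unfolding z_def power_mult_distrib[symmetric]
    by (intro power_mono norm_matrix_vector_mult_le norm_ge_zero)
  then have "b\<^sup>2 * (norm z)\<^sup>2 \<le> b * (b * (norm A)\<^sup>2) * (norm w)\<^sup>2"
    using \<open>0 \<le> b\<close> by (simp add: power2_eq_square mult_left_mono mult.assoc)
  also have "\<dots> \<le> b * 1 * (norm w)\<^sup>2"
    using assms by (intro mult_right_mono mult_left_mono) auto
  finally have bz: "b\<^sup>2 * (norm z)\<^sup>2 \<le> b * (norm w)\<^sup>2"
    by simp
  have "(norm (y - b *\<^sub>R z))\<^sup>2 = (norm y)\<^sup>2 - 2 * b * (y \<bullet> z) + b\<^sup>2 * (norm z)\<^sup>2"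
    by (simp only: power2_norm_eq_inner)
      (simp add: inner_diff_left inner_diff_right inner_commute power2_eq_square algebra_simps)
  also have "y \<bullet> z = (norm w)\<^sup>2"
    unfolding z_def w_def by (rule power2_norm_transpose_mult[symmetric])
  finally show ?thesis
    using cauchy bz by (simp add: z_def w_def)
qed

lemma norm_diff_ge_of_power2_le:
  fixes y z :: "'a::real_normed_vector"
  assumes "(norm y)\<^sup>2 \<le> (norm z)\<^sup>2 - D" "0 \<le> D" "norm z \<le> B" "0 < B"
  shows "D / (2 * B) \<le> norm z - norm y"
proof -
  have "(norm y)\<^sup>2 \<le> (norm z)\<^sup>2"
    using assms(1,2) by linarith
  then have "norm y \<le> norm z"
    by (rule power2_le_imp_le) simp
  have "D \<le> (norm z - norm y) * (norm z + norm y)"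
    using assms(1) by (simp add: power2_eq_square algebra_simps)
  also have "\<dots> \<le> (norm z - norm y) * (2 * B)"
    using \<open>norm y \<le> norm z\<close> assms(3) by (intro mult_left_mono) auto
  finally show ?thesis
    using assms(4) by (simp add: pos_divide_le_eq)
qed

lemma subseq_tendsto_zero_if_frequently_small:
  fixes a :: "nat \<Rightarrow> 'a::real_normed_vector"
  assumes small: "\<And>e N. 0 < e \<Longrightarrow> \<exists>k\<ge>N. norm (a k) < e"
  shows "\<exists>K. strict_mono K \<and> (\<lambda>i. a (K i)) \<longlonglongrightarrow> 0"
proof -
  have "\<exists>K. \<forall>i. norm (a (K i)) < inverse (Suc i) \<and> K i < K (Suc i)"
  proof (rule dependent_nat_choice)
    show "\<exists>k. norm (a k) < inverse (Suc 0)"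
      using small[of 1 0] by auto
    show "\<exists>k'. norm (a k') < inverse (Suc (Suc i)) \<and> k < k'" for k i
      using small[of "inverse (Suc (Suc i))" "Suc k"] by (auto simp del: of_nat_Suc)
  qed
  then obtain K where K: "\<And>i. norm (a (K i)) < inverse (Suc i)" "\<And>i. K i < K (Suc i)"
    by blast
  have "(\<lambda>i. a (K i)) \<longlonglongrightarrow> 0"
  proof (rule Lim_null_comparison)
    show "\<forall>\<^sub>F i in sequentially. norm (a (K i)) \<le> inverse (Suc i)"
      using K(1) by (simp add: less_imp_le)
  qed (rule LIMSEQ_inverse_real_of_nat)
  with K(2) show ?thesis
    by (auto simp: strict_mono_Suc_iff)
qed

lemma descent_or_shrink_absurd:
  fixes P a :: "nat \<Rightarrow> real"
  assumes "\<And>k. 0 \<le> P k" "\<And>k. a_min \<le> a k" "0 < a_min" "0 < d" "0 < q" "q < 1"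
    and step: "\<And>k. (P (Suc k) \<le> P k - d \<and> a (Suc k) = a k) \<or> (P (Suc k) \<le> P k \<and> a (Suc k) = q * a k)"
  shows False
proof -
  \<comment> \<open>Each iteration lowers the potential M by at least one, yet M is bounded below.\<close>
  define l where "l = ln (1 / q)"
  define M where "M k = P k / d + ln (a k) / l" for k
  have "0 < l"
    using assms by (simp add: l_def)
  have a_pos: "0 < a k" for k
    using assms(2,3) by (meson order.strict_trans2)
  have M_Suc: "M (Suc k) \<le> M k - 1" for k
    using step[of k]
  proof
    assume *: "P (Suc k) \<le> P k - d \<and> a (Suc k) = a k"
    then have "P (Suc k) / d \<le> (P k - d) / d"
      using \<open>0 < d\<close> by (simp add: divide_right_mono)
    with * show ?thesis
      using \<open>0 < d\<close> by (simp add: M_def diff_divide_distrib)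
  next
    assume "P (Suc k) \<le> P k \<and> a (Suc k) = q * a k"
    moreover have "ln (q * a k) = ln (a k) - l"
      using \<open>0 < q\<close> a_pos[of k] by (simp add: l_def ln_mult ln_div)
    ultimately show ?thesis
      using \<open>0 < d\<close> \<open>0 < l\<close> by (simp add: M_def divide_right_mono diff_divide_distrib)
  qed
  obtain n :: nat where n: "M 0 - ln a_min / l < n"
    using reals_Archimedean2 by blast
  have "M n \<le> M 0 - n"
  proof (induction n)
    case (Suc n)
    then show ?case
      using M_Suc[of n] by simp
  qed simp
  moreover have "ln a_min / l \<le> M n"
  proof -
    have "ln a_min \<le> ln (a n)"
      using assms(2)[of n] assms(3) by simp
    then have "ln a_min / l \<le> ln (a n) / l"
      using \<open>0 < l\<close> by (simp add: divide_right_mono)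
    moreover have "0 \<le> P n / d"
      using assms(1,4) by simp
    ultimately show ?thesis
      by (simp add: M_def)
  qed
  ultimately show False
    using n by linarith
qed

lemma ex_pos_bound:
  assumes "\<exists>B. \<forall>y\<in>X. b y \<le> (B::real)"
  shows "\<exists>B>0. \<forall>y\<in>X. b y \<le> B"
  using assms by (meson gt_ex le_less_trans less_le_not_le linorder_le_cases order_trans)

lemma ex_pos_Lipschitz_const:
  fixes d :: "'a::real_normed_vector \<Rightarrow> 'a \<Rightarrow> real"
  assumes "\<exists>L. \<forall>y\<in>X. \<forall>z\<in>X. d y z \<le> L * norm (y - z)"
  shows "\<exists>L>0. \<forall>y\<in>X. \<forall>z\<in>X. d y z \<le> L * norm (y - z)"
proof -
  obtain L where L: "\<forall>y\<in>X. \<forall>z\<in>X. d y z \<le> L * norm (y - z)"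
    using assms by blast
  have "L * norm (y - z) \<le> max L 1 * norm (y - z)" for y z
    by (simp add: mult_right_mono)
  with L show ?thesis
    by (metis max.strict_coboundedI2 order_trans zero_less_one)
qed

lemma subspace_matrix_kernel: "subspace {w. (A::real^'n^'m) *v w = 0}"
  by (auto simp: subspace_def matrix_vector_right_distrib matrix_vector_mult_scaleR)

locale prox_sqp =
  fixes f :: "real^'n \<Rightarrow> real" and g :: "real^'n \<Rightarrow> real^'n"
    and c :: "real^'n \<Rightarrow> real^'m" and J :: "real^'n \<Rightarrow> real^'n^'m"
    and r :: "real^'n \<Rightarrow> real"
    and X :: "(real^'n) set"
    and x v u :: "nat \<Rightarrow> real^'n"
    and alpha tau beta :: "nat \<Rightarrow> real"
    and tau_m1 kappa_v sigma_c eps_tau xi eta sigma_u :: real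
    and f_low Bg Lg Bc BJ LJ Br :: real
  assumes f_deriv: "\<And>y. (f has_derivative (\<lambda>h. g y \<bullet> h)) (at y)"
    and c_deriv: "\<And>y. (c has_derivative (\<lambda>h. J y *v h)) (at y)"
    and r_nonneg: "\<And>y. r y \<ge> 0"
    and r_convex: "convex_on UNIV r"
    and params: "kappa_v > 0" "0 < sigma_c" "sigma_c < 1" "0 < eps_tau" "eps_tau < 1"
      "0 < xi" "xi < 1" "0 < eta" "eta < 1" "0 < sigma_u"
    and init: "alpha 0 > 0" "tau_m1 > 0"
    and step1_zero: "\<And>k. transpose (J (x k)) *v c (x k) = 0 \<Longrightarrow> v k = 0"
    and step1_beta: "\<And>k. transpose (J (x k)) *v c (x k) \<noteq> 0 \<Longrightarrow>
        0 \<le> beta k \<and> beta k \<le> kappa_v * alpha k \<and>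
        (\<forall>b. 0 \<le> b \<and> b \<le> kappa_v * alpha k \<longrightarrow>
           (1/2) * (norm (c (x k) - beta k *\<^sub>R (J (x k) *v (transpose (J (x k)) *v c (x k)))))^2
           \<le> (1/2) * (norm (c (x k) - b *\<^sub>R (J (x k) *v (transpose (J (x k)) *v c (x k)))))^2)"
    and step1_v: "\<And>k. transpose (J (x k)) *v c (x k) \<noteq> 0 \<Longrightarrow>
        (\<exists>w. v k = transpose (J (x k)) *v w) \<and>
        norm (v k) \<le> kappa_v * alpha k * norm (transpose (J (x k)) *v c (x k)) \<and>
        norm (c (x k) + J (x k) *v v k)
          \<le> norm (c (x k) + J (x k) *v (- beta k *\<^sub>R (transpose (J (x k)) *v c (x k))))"
    and step2: "\<And>k. J (x k) *v u k = 0 \<and>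
        (\<forall>w. J (x k) *v w = 0 \<longrightarrow>
           g (x k) \<bullet> u k + (1 / (2 * alpha k)) * (norm (u k))^2 + r (x k + v k + u k)
           \<le> g (x k) \<bullet> w + (1 / (2 * alpha k)) * (norm w)^2 + r (x k + v k + w))"
    and step3: "\<And>k. let s = v k + u k;
        D = g (x k) \<bullet> s + (sigma_u + 1/2) * (norm s)^2 / alpha k + r (x k + s) - r (x k);
        tprev = (if k = 0 then tau_m1 else tau (k - 1));
        ttrial = (1 - sigma_c) * (norm (c (x k)) - norm (c (x k) + J (x k) *v v k)) / D
      in tau k = (if D \<le> 0 then tprev
                  else if tprev \<le> ttrial then tprev else min ((1 - eps_tau) * tprev) ttrial)"
    and step4: "\<And>k. let s = v k + u k in
      (if merit (tau k) f r c (x k + s)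
            \<le> merit (tau k) f r c (x k) - eta * model_red f g r c J (x k) (alpha k) s (tau k)
       then x (Suc k) = x k + s \<and> alpha (Suc k) = alpha k
       else x (Suc k) = x k \<and> alpha (Suc k) = xi * alpha k)"
    and X: "open X" "convex X" "\<And>k. x k \<in> X" "\<And>k. x k + (v k + u k) \<in> X"
    and f_low: "\<And>y. y \<in> X \<Longrightarrow> f_low \<le> f y"
    and g_bdd: "\<And>y. y \<in> X \<Longrightarrow> norm (g y) \<le> Bg"
    and g_lip: "\<And>y z. y \<in> X \<Longrightarrow> z \<in> X \<Longrightarrow> norm (g y - g z) \<le> Lg * norm (y - z)"
    and c_bdd: "\<And>y. y \<in> X \<Longrightarrow> norm (c y) \<le> Bc"
    and J_bdd: "\<And>y. y \<in> X \<Longrightarrow> norm (J y) \<le> BJ"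
    and J_lip: "\<And>y z. y \<in> X \<Longrightarrow> z \<in> X \<Longrightarrow> norm (J y - J z) \<le> LJ * norm (y - z)"
    and r_subgrad_bdd: "\<And>y d. y \<in> X \<Longrightarrow> is_subgrad r y d \<Longrightarrow> norm d \<le> Br"
    and consts_pos: "0 < Lg" "0 < Bc" "0 < BJ" "0 < LJ"
begin

abbreviation s :: "nat \<Rightarrow> real^'n" where
  "s k \<equiv> v k + u k"

abbreviation JTc :: "nat \<Rightarrow> real^'n" where
  "JTc k \<equiv> transpose (J (x k)) *v c (x k)"

definition lin_red :: "nat \<Rightarrow> real" where
  "lin_red k = norm (c (x k)) - norm (c (x k) + J (x k) *v v k)"

abbreviation Dq :: "nat \<Rightarrow> real" where
  "Dq k \<equiv> model_red f g r c J (x k) (alpha k) (s k) (tau k)"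

abbreviation tau_prev :: "nat \<Rightarrow> real" where
  "tau_prev k \<equiv> if k = 0 then tau_m1 else tau (k - 1)"

definition accepted :: "nat \<Rightarrow> bool" where
  "accepted k \<longleftrightarrow> merit (tau k) f r c (x k + s k) \<le> merit (tau k) f r c (x k) - eta * Dq k"

lemma accepted_step: "accepted k \<Longrightarrow> x (Suc k) = x k + s k \<and> alpha (Suc k) = alpha k"
  using step4[of k] by (simp add: accepted_def Let_def)

lemma rejected_step: "\<not> accepted k \<Longrightarrow> x (Suc k) = x k \<and> alpha (Suc k) = xi * alpha k"
  using step4[of k] by (simp add: accepted_def Let_def)

lemma alpha_pos: "0 < alpha k"
proof (induction k)
  case (Suc k)
  then show ?case
    using accepted_step[of k] rejected_step[of k] params by (cases "accepted k") auto
qed (rule init)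

lemma J_mult_s: "J (x k) *v s k = J (x k) *v v k"
  using step2[of k] by (simp add: matrix_vector_right_distrib)

lemma normal_step_decrease:
  assumes "JTc k \<noteq> 0" "0 \<le> b" "b \<le> kappa_v * alpha k" "b * (norm (J (x k)))\<^sup>2 \<le> 1"
  shows "(norm (c (x k) + J (x k) *v v k))\<^sup>2 \<le> (norm (c (x k)))\<^sup>2 - b * (norm (JTc k))\<^sup>2"
proof -
  let ?y = "c (x k)" and ?A = "J (x k)"
  have "?A *v (- beta k *\<^sub>R JTc k) = - (beta k *\<^sub>R (?A *v JTc k))"
    by (subst matrix_vector_mult_scaleR) simp
  then have "norm (?y + ?A *v v k) \<le> norm (?y - beta k *\<^sub>R (?A *v JTc k))"
    using step1_v[OF assms(1)] by simp
  then have "(norm (?y + ?A *v v k))\<^sup>2 \<le> (norm (?y - beta k *\<^sub>R (?A *v JTc k)))\<^sup>2"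
    by (simp add: power_mono)
  also have "\<dots> \<le> (norm ?y)\<^sup>2 - b * (norm (JTc k))\<^sup>2"
    using step1_beta[OF assms(1)] assms(2-4) by (intro cauchy_step_decrease) auto
  finally show ?thesis .
qed

lemma lin_red_nonneg: "0 \<le> lin_red k"
proof (cases "JTc k = 0")
  case False
  then have "(norm (c (x k) + J (x k) *v v k))\<^sup>2 \<le> (norm (c (x k)))\<^sup>2"
    using normal_step_decrease[of k 0] alpha_pos[of k] params by simp
  then show ?thesis
    unfolding lin_red_def using power2_le_imp_le by fastforce
qed (simp add: lin_red_def step1_zero)

definition D :: "nat \<Rightarrow> real" where
  "D k = g (x k) \<bullet> s k + (sigma_u + 1/2) * (norm (s k))\<^sup>2 / alpha k + r (x k + s k) - r (x k)"

lemma tau_update: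
  assumes "0 \<le> tau_prev k"
  shows "0 \<le> tau k \<and> tau k \<le> tau_prev k \<and> tau k * D k \<le> (1 - sigma_c) * lin_red k"
proof -
  define t_trial where "t_trial = (1 - sigma_c) * lin_red k / D k"
  have tau_k: "tau k = (if D k \<le> 0 then tau_prev k
      else if tau_prev k \<le> t_trial then tau_prev k else min ((1 - eps_tau) * tau_prev k) t_trial)"
    using step3[of k] unfolding D_def lin_red_def t_trial_def by (simp add: Let_def)
  have "0 \<le> (1 - sigma_c) * lin_red k"
    using lin_red_nonneg[of k] params by simp
  show ?thesis
  proof (cases "D k \<le> 0")
    case True
    then have "tau k * D k \<le> 0"
      using tau_k assms by (simp add: mult_nonneg_nonpos)
    with True tau_k assms \<open>0 \<le> (1 - sigma_c) * lin_red k\<close> show ?thesis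
      by simp
  next
    case False
    then have "0 \<le> t_trial" "t_trial * D k = (1 - sigma_c) * lin_red k"
      using \<open>0 \<le> (1 - sigma_c) * lin_red k\<close> by (auto simp: t_trial_def)
    have "(1 - eps_tau) * tau_prev k \<le> tau_prev k" "0 \<le> (1 - eps_tau) * tau_prev k"
      using assms params by (auto simp: mult_left_le_one_le)
    then have "0 \<le> tau k \<and> tau k \<le> tau_prev k \<and> tau k \<le> t_trial"
      using tau_k False assms \<open>0 \<le> t_trial\<close> by (auto simp: min_def)
    moreover have "tau k * D k \<le> t_trial * D k" if "tau k \<le> t_trial"
      using that False by (simp add: mult_right_mono)
    ultimately show ?thesis
      using \<open>t_trial * D k = (1 - sigma_c) * lin_red k\<close> by simp
  qed
qed

lemma tau_nonneg_le_prev: "0 \<le> tau k \<and> tau k \<le> tau_prev k"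
proof (induction k)
  case 0
  then show ?case
    using tau_update[of 0] init by simp
next
  case (Suc k)
  then show ?case
    using tau_update[of "Suc k"] by simp
qed

lemma tau_nonneg: "0 \<le> tau k"
  using tau_nonneg_le_prev by blast

lemma tau_Suc_le: "tau (Suc k) \<le> tau k"
  using tau_nonneg_le_prev[of "Suc k"] by simp

lemma model_red_ge: "sigma_c * lin_red k \<le> Dq k"
proof -
  have "tau k * D k \<le> (1 - sigma_c) * lin_red k"
    using tau_update[of k] tau_nonneg_le_prev[of k] init by (cases k) auto
  moreover have "Dq k = - tau k * D k + tau k * (sigma_u * (norm (s k))\<^sup>2 / alpha k) + lin_red k"
    unfolding model_red_def D_def lin_red_def J_mult_s using alpha_pos[of k] by (simp add: field_simps)
  moreover have "0 \<le> tau k * (sigma_u * (norm (s k))\<^sup>2 / alpha k)"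
    using tau_nonneg[of k] alpha_pos[of k] params by simp
  ultimately show ?thesis
    by (simp add: algebra_simps)
qed

lemma r_diff_le: "y \<in> X \<Longrightarrow> r y - r z \<le> Br * norm (y - z)"
  by (rule convex_on_diff_le_subgrad_bound[OF r_convex r_subgrad_bdd])

lemma Br_nonneg: "0 \<le> Br"
proof -
  obtain d where "\<And>y. r (x 0) + d \<bullet> (y - x 0) \<le> r y"
    using convex_on_UNIV_subgradient[OF r_convex] by blast
  then have "is_subgrad r (x 0) d"
    by (simp add: is_subgrad_def add.commute)
  then have "norm d \<le> Br"
    by (rule r_subgrad_bdd[OF X(3)])
  then show ?thesis
    using norm_ge_zero order_trans by blast
qed

lemma Bg_nonneg: "0 \<le> Bg"
  using g_bdd[OF X(3)[of 0]] norm_ge_zero order_trans by blast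

lemma norm_v_le: "norm (v k) \<le> kappa_v * BJ * Bc * alpha k"
proof (cases "JTc k = 0")
  case True
  then show ?thesis
    using step1_zero params consts_pos alpha_pos[of k] by simp
next
  case False
  have "norm (JTc k) \<le> BJ * Bc"
    using norm_transpose_mult_le[of "J (x k)"] J_bdd[OF X(3)] c_bdd[OF X(3)] consts_pos
    by (meson norm_ge_zero mult_mono order_trans)
  then have "kappa_v * alpha k * norm (JTc k) \<le> kappa_v * alpha k * (BJ * Bc)"
    using params alpha_pos[of k] by (intro mult_left_mono) auto
  then show ?thesis
    using step1_v[OF False] by (simp add: algebra_simps)
qed

lemma norm_u_le: "norm (u k) \<le> 2 * alpha k * (Br + Bg)"
proof (rule norm_prox_minimizer_le[where V = "{w. J (x k) *v w = 0}"])
  show "g (x k) \<bullet> u k + 1 / (2 * alpha k) * (norm (u k))\<^sup>2 + r (x k + v k + u k)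
      \<le> g (x k) \<bullet> w + 1 / (2 * alpha k) * (norm w)\<^sup>2 + r (x k + v k + w)" if "w \<in> {w. J (x k) *v w = 0}" for w
    using step2[of k] that by blast
  show "x k + v k + u k \<in> X"
    using X(4)[of k] by (simp add: add.assoc)
qed (use subspace_matrix_kernel step2 alpha_pos X(1) g_bdd[OF X(3)] Br_nonneg r_diff_le in auto)

definition step_const :: real where
  "step_const = kappa_v * BJ * Bc + 2 * (Br + Bg)"

lemma step_const_pos: "0 < step_const"
  using params consts_pos Br_nonneg Bg_nonneg by (simp add: step_const_def add_pos_nonneg)

lemma norm_s_le: "norm (s k) \<le> step_const * alpha k"
  using norm_triangle_ineq[of "v k" "u k"] norm_v_le[of k] norm_u_le[of k]
  by (simp add: step_const_def algebra_simps)

lemma f_expansion_le: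
  assumes "y \<in> X" "y + h \<in> X"
  shows "f (y + h) \<le> f y + g y \<bullet> h + Lg * (norm h)\<^sup>2"
proof -
  have "onorm ((\<lambda>h. g z \<bullet> h) - (\<lambda>h. g y \<bullet> h)) \<le> Lg * norm (z - y)" if "z \<in> X" for z
  proof -
    have "(\<lambda>h. g z \<bullet> h) - (\<lambda>h. g y \<bullet> h) = (\<lambda>h. (g z - g y) \<bullet> h)"
      by (simp add: fun_eq_iff inner_diff_left)
    then show ?thesis
      using onorm_inner_left_le[of "g z - g y"] g_lip[OF that assms(1)] by simp
  qed
  then have "norm (f (y + h) - f y - g y \<bullet> h) \<le> Lg * (norm h)\<^sup>2"
    using assms X(2) consts_pos
    by (intro lipschitz_derivative_remainder_le[where F' = "\<lambda>z h. g z \<bullet> h"])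
      (auto intro: has_derivative_at_withinI f_deriv)
  then show ?thesis
    by simp
qed

lemma c_expansion_le:
  assumes "y \<in> X" "y + h \<in> X"
  shows "norm (c (y + h) - c y - J y *v h) \<le> LJ * (norm h)\<^sup>2"
proof -
  have "onorm ((*v) (J z) - (*v) (J y)) \<le> LJ * norm (z - y)" if "z \<in> X" for z
  proof -
    have "(*v) (J z) - (*v) (J y) = (*v) (J z - J y)"
      by (simp add: fun_eq_iff matrix_vector_mult_diff_rdistrib)
    then show ?thesis
      using onorm_matrix_vector_mult_le[of "J z - J y"] J_lip[OF that assms(1)] by simp
  qed
  then show ?thesis
    using assms X(2) consts_pos
    by (intro lipschitz_derivative_remainder_le[where F' = "\<lambda>z. (*v) (J z)"])
      (auto intro: has_derivative_at_withinI c_deriv)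
qed

lemma merit_trial_le:
  "merit (tau k) f r c (x k + s k)
    \<le> merit (tau k) f r c (x k) - Dq k + (tau k * (Lg - 1 / (2 * alpha k)) + LJ) * (norm (s k))\<^sup>2"
proof -
  have "tau k * f (x k + s k) \<le> tau k * (f (x k) + g (x k) \<bullet> s k + Lg * (norm (s k))\<^sup>2)"
    using f_expansion_le[OF X(3)[of k] X(4)[of k]] tau_nonneg[of k] by (intro mult_left_mono) auto
  moreover have "norm (c (x k + s k)) \<le> norm (c (x k) + J (x k) *v v k) + LJ * (norm (s k))\<^sup>2"
  proof -
    have "c (x k + s k) = (c (x k) + J (x k) *v v k) + (c (x k + s k) - c (x k) - J (x k) *v s k)"
      by (simp add: J_mult_s)
    then have "norm (c (x k + s k))
        \<le> norm (c (x k) + J (x k) *v v k) + norm (c (x k + s k) - c (x k) - J (x k) *v s k)"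
      by (metis norm_triangle_ineq)
    with c_expansion_le[OF X(3)[of k] X(4)[of k]] show ?thesis
      by linarith
  qed
  moreover have "merit (tau k) f r c (x k + s k)
      = tau k * f (x k + s k) + tau k * r (x k + s k) + norm (c (x k + s k))"
    by (simp add: merit_def algebra_simps)
  moreover have "merit (tau k) f r c (x k) - Dq k + (tau k * (Lg - 1 / (2 * alpha k)) + LJ) * (norm (s k))\<^sup>2
      = tau k * (f (x k) + g (x k) \<bullet> s k + Lg * (norm (s k))\<^sup>2) + tau k * r (x k + s k)
        + (norm (c (x k) + J (x k) *v v k) + LJ * (norm (s k))\<^sup>2)"
    unfolding merit_def model_red_def J_mult_s using alpha_pos[of k] by (simp add: field_simps)
  ultimately show ?thesis
    by linarith
qed


lemma accepted_if_curvature_dominated: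
  assumes "2 * alpha k * Lg \<le> 1" "LJ * (norm (s k))\<^sup>2 \<le> (1 - eta) * Dq k"
  shows "accepted k"
proof -
  have "Lg \<le> 1 / (2 * alpha k)"
    using assms(1) alpha_pos[of k] by (simp add: field_simps)
  then have "tau k * (Lg - 1 / (2 * alpha k)) * (norm (s k))\<^sup>2 \<le> 0"
    using tau_nonneg[of k] by (simp add: mult_nonneg_nonpos mult_nonpos_nonneg)
  then show ?thesis
    using merit_trial_le[of k] assms(2) by (simp add: accepted_def algebra_simps)
qed

text \<open>The merit function shifted by tau k * f_low: since f + r - f_low \<ge> 0 on X, decreasing
  the merit parameter can only lower it, so it is nonincreasing along the iterates.\<close>

definition potential :: "nat \<Rightarrow> real" where
  "potential k = tau k * (f (x k) + r (x k) - f_low) + norm (c (x k))"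

lemma potential_nonneg: "0 \<le> potential k"
  using f_low[OF X(3)[of k]] r_nonneg[of "x k"] tau_nonneg[of k] by (simp add: potential_def)

lemma potential_Suc_le: "potential (Suc k) \<le> merit (tau k) f r c (x (Suc k)) - tau k * f_low"
proof -
  have "tau (Suc k) * (f (x (Suc k)) + r (x (Suc k)) - f_low) \<le> tau k * (f (x (Suc k)) + r (x (Suc k)) - f_low)"
    using f_low[OF X(3)[of "Suc k"]] r_nonneg[of "x (Suc k)"] tau_Suc_le[of k]
    by (intro mult_right_mono) auto
  then show ?thesis
    by (simp add: potential_def merit_def algebra_simps)
qed

lemma potential_accepted: "accepted k \<Longrightarrow> potential (Suc k) \<le> potential k - eta * Dq k"
  using potential_Suc_le[of k] accepted_step[of k]
  by (simp add: accepted_def potential_def merit_def algebra_simps)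

lemma potential_rejected: "\<not> accepted k \<Longrightarrow> potential (Suc k) \<le> potential k"
  using potential_Suc_le[of k] rejected_step[of k]
  by (simp add: potential_def merit_def algebra_simps)

context
  fixes eps :: real and k0 :: nat
  assumes eps_pos: "0 < eps" and JTc_ge: "\<And>k. k0 \<le> k \<Longrightarrow> eps \<le> norm (JTc k)"
begin

lemma lin_red_ge:
  assumes "k0 \<le> k" "0 \<le> b" "b \<le> kappa_v * alpha k" "b * BJ\<^sup>2 \<le> 1"
  shows "b * eps\<^sup>2 / (2 * Bc) \<le> lin_red k"
proof -
  have "JTc k \<noteq> 0"
    using JTc_ge[OF assms(1)] eps_pos by auto
  have "b * (norm (J (x k)))\<^sup>2 \<le> b * BJ\<^sup>2"
    using J_bdd[OF X(3)] assms(2) by (intro mult_left_mono power_mono) auto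
  then have "(norm (c (x k) + J (x k) *v v k))\<^sup>2 \<le> (norm (c (x k)))\<^sup>2 - b * (norm (JTc k))\<^sup>2"
    using normal_step_decrease[OF \<open>JTc k \<noteq> 0\<close>] assms by simp
  then have "b * (norm (JTc k))\<^sup>2 / (2 * Bc) \<le> lin_red k"
    unfolding lin_red_def using assms(2) c_bdd[OF X(3)] consts_pos
    by (intro norm_diff_ge_of_power2_le) auto
  moreover have "b * eps\<^sup>2 \<le> b * (norm (JTc k))\<^sup>2"
    using JTc_ge[OF assms(1)] eps_pos assms(2) by (intro mult_left_mono power_mono) auto
  ultimately show ?thesis
    using consts_pos by (meson divide_right_mono order_trans zero_le_mult_iff zero_le_numeral less_imp_le)
qed

lemma small_alpha_accepted:
  obtains a_acc where "0 < a_acc" "\<And>k. k0 \<le> k \<Longrightarrow> alpha k \<le> a_acc \<Longrightarrow> accepted k"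
proof
  define C where "C = (1 - eta) * sigma_c * kappa_v * eps\<^sup>2 / (2 * Bc)"
  have "0 < C"
    using params eps_pos consts_pos by (simp add: C_def)
  define a_acc where "a_acc = min (1 / (2 * Lg)) (min (1 / (kappa_v * BJ\<^sup>2)) (C / (LJ * step_const\<^sup>2)))"
  show "0 < a_acc"
    using params consts_pos step_const_pos \<open>0 < C\<close> by (simp add: a_acc_def)
  fix k
  assume "k0 \<le> k" "alpha k \<le> a_acc"
  then have a: "2 * alpha k * Lg \<le> 1" "kappa_v * alpha k * BJ\<^sup>2 \<le> 1" "LJ * step_const\<^sup>2 * alpha k \<le> C"
    using params consts_pos step_const_pos by (auto simp: a_acc_def field_simps)
  have "LJ * (norm (s k))\<^sup>2 \<le> LJ * (step_const * alpha k)\<^sup>2"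
    using norm_s_le[of k] consts_pos by (intro mult_left_mono power_mono) auto
  also have "\<dots> = alpha k * (LJ * step_const\<^sup>2 * alpha k)"
    by (simp add: power2_eq_square)
  also have "\<dots> \<le> alpha k * C"
    using a(3) alpha_pos[of k] by (intro mult_left_mono) auto
  also have "\<dots> = (1 - eta) * sigma_c * (kappa_v * alpha k * eps\<^sup>2 / (2 * Bc))"
    by (simp add: C_def)
  also have "\<dots> \<le> (1 - eta) * sigma_c * lin_red k"
    using lin_red_ge[OF \<open>k0 \<le> k\<close>, of "kappa_v * alpha k"] a(2) params alpha_pos[of k]
    by (intro mult_left_mono) (auto simp: mult.assoc)
  also have "\<dots> \<le> (1 - eta) * Dq k"
    using model_red_ge[of k] params by (simp add: mult.assoc)
  finally show "accepted k"
    by (rule accepted_if_curvature_dominated[OF a(1)])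
qed

lemma alpha_bounded_below:
  obtains a_min where "0 < a_min" "\<And>k. k0 \<le> k \<Longrightarrow> a_min \<le> alpha k"
proof -
  obtain a_acc where "0 < a_acc" and acc: "\<And>k. k0 \<le> k \<Longrightarrow> alpha k \<le> a_acc \<Longrightarrow> accepted k"
    using small_alpha_accepted by blast
  define a_min where "a_min = min (alpha k0) (xi * a_acc)"
  \<comment> \<open>alpha only shrinks after a rejection, which needs alpha above a_acc.\<close>
  have "a_min \<le> alpha k" if "k0 \<le> k" for k
    using that
  proof (induction k rule: dec_induct)
    case base
    then show ?case
      by (simp add: a_min_def)
  next
    case (step k)
    show ?case
    proof (cases "accepted k")
      case True
      then show ?thesis
        using accepted_step[of k] step.IH by simp
    next
      case False
      then have "a_acc < alpha k"
        using acc[OF step.hyps(1)] by force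
      then have "xi * a_acc \<le> xi * alpha k"
        using params by simp
      then show ?thesis
        using rejected_step[OF False] by (simp add: a_min_def)
    qed
  qed
  moreover have "0 < a_min"
    using alpha_pos[of k0] \<open>0 < a_acc\<close> params by (simp add: a_min_def)
  ultimately show thesis
    using that by blast
qed

lemma model_red_bounded_below:
  obtains \<delta> where "0 < \<delta>" "\<And>k. k0 \<le> k \<Longrightarrow> \<delta> \<le> Dq k"
proof -
  obtain a_min where "0 < a_min" and a_min: "\<And>k. k0 \<le> k \<Longrightarrow> a_min \<le> alpha k"
    using alpha_bounded_below by blast
  define b where "b = min (kappa_v * a_min) (1 / BJ\<^sup>2)"
  have "0 < b"
    using \<open>0 < a_min\<close> params consts_pos by (simp add: b_def)
  have "sigma_c * (b * eps\<^sup>2 / (2 * Bc)) \<le> Dq k" if "k0 \<le> k" for k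
  proof -
    have "b \<le> kappa_v * alpha k"
      using a_min[OF that] params by (auto simp: b_def min_le_iff_disj)
    moreover have "b * BJ\<^sup>2 \<le> 1"
      using consts_pos by (simp add: b_def min_def field_simps)
    ultimately have "b * eps\<^sup>2 / (2 * Bc) \<le> lin_red k"
      using lin_red_ge[OF that] \<open>0 < b\<close> by simp
    then show ?thesis
      using model_red_ge[of k] params by (meson mult_left_mono less_imp_le order_trans)
  qed
  moreover have "0 < sigma_c * (b * eps\<^sup>2 / (2 * Bc))"
    using \<open>0 < b\<close> params eps_pos consts_pos by simp
  ultimately show thesis
    using that by blast
qed

lemma JTc_bounded_away_absurd: False
proof -
  obtain a_min where "0 < a_min" and a_min: "\<And>k. k0 \<le> k \<Longrightarrow> a_min \<le> alpha k"
    using alpha_bounded_below by blast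
  obtain \<delta> where "0 < \<delta>" and \<delta>: "\<And>k. k0 \<le> k \<Longrightarrow> \<delta> \<le> Dq k"
    using model_red_bounded_below by blast
  have "potential (Suc k) \<le> potential k - eta * \<delta> \<and> alpha (Suc k) = alpha k
      \<or> potential (Suc k) \<le> potential k \<and> alpha (Suc k) = xi * alpha k" if "k0 \<le> k" for k
  proof (cases "accepted k")
    case True
    have "eta * \<delta> \<le> eta * Dq k"
      using \<delta>[OF that] params by simp
    then show ?thesis
      using True potential_accepted accepted_step by fastforce
  next
    case False
    then show ?thesis
      using potential_rejected rejected_step by blast
  qed
  then show False
    using potential_nonneg a_min \<open>0 < a_min\<close> \<open>0 < \<delta>\<close> params
    by (intro descent_or_shrink_absurd[where P = "\<lambda>i. potential (k0 + i)" and a = "\<lambda>i. alpha (k0 + i)"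
          and a_min = a_min and d = "eta * \<delta>" and q = xi]) auto
qed

end


lemma JTc_frequently_small: "0 < e \<Longrightarrow> \<exists>k\<ge>N. norm (JTc k) < e"
  using JTc_bounded_away_absurd[of e N] by (meson not_le)

lemma subseq_JTc_tendsto_zero: "\<exists>K. strict_mono K \<and> (\<lambda>i. JTc (K i)) \<longlonglongrightarrow> 0"
  using JTc_frequently_small by (rule subseq_tendsto_zero_if_frequently_small)

end

theorem theorem3p10:
  fixes f :: "real^'n \<Rightarrow> real" and g :: "real^'n \<Rightarrow> real^'n"
    and c :: "real^'n \<Rightarrow> real^'m" and J :: "real^'n \<Rightarrow> real^'n^'m"
    and r :: "real^'n \<Rightarrow> real"
    and X :: "(real^'n) set"
    and x v u :: "nat \<Rightarrow> real^'n"
    and alpha tau beta :: "nat \<Rightarrow> real"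
    and tau_m1 kappa_v sigma_c eps_tau xi eta sigma_u :: real
  assumes dims: "CARD('m) \<le> CARD('n)"
    and f_deriv: "\<And>y. (f has_derivative (\<lambda>h. g y \<bullet> h)) (at y)"
    and g_cont: "continuous_on UNIV g"
    and c_deriv: "\<And>y. (c has_derivative (\<lambda>h. J y *v h)) (at y)"
    and J_cont: "continuous_on UNIV J"
    and r_nonneg: "\<And>y. r y \<ge> 0"
    and r_convex: "convex_on UNIV r"
    and params: "kappa_v > 0" "0 < sigma_c" "sigma_c < 1" "0 < eps_tau" "eps_tau < 1"
      "0 < xi" "xi < 1" "0 < eta" "eta < 1" "0 < sigma_u" "sigma_u \<le> 1/2"
    and init: "alpha 0 > 0" "tau_m1 > 0"
    \<comment> \<open>Step 1 (the algorithm does not terminate in step 1)\<close>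
    and no_term1: "\<And>k. transpose (J (x k)) *v c (x k) = 0 \<Longrightarrow> c (x k) = 0"
    and step1_zero: "\<And>k. transpose (J (x k)) *v c (x k) = 0 \<Longrightarrow> v k = 0"
    and step1_beta: "\<And>k. transpose (J (x k)) *v c (x k) \<noteq> 0 \<Longrightarrow>
        0 \<le> beta k \<and> beta k \<le> kappa_v * alpha k \<and>
        (\<forall>b. 0 \<le> b \<and> b \<le> kappa_v * alpha k \<longrightarrow>
           (1/2) * (norm (c (x k) - beta k *\<^sub>R (J (x k) *v (transpose (J (x k)) *v c (x k)))))^2
           \<le> (1/2) * (norm (c (x k) - b *\<^sub>R (J (x k) *v (transpose (J (x k)) *v c (x k)))))^2)"
    and step1_v: "\<And>k. transpose (J (x k)) *v c (x k) \<noteq> 0 \<Longrightarrow>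
        (\<exists>w. v k = transpose (J (x k)) *v w) \<and>
        norm (v k) \<le> kappa_v * alpha k * norm (transpose (J (x k)) *v c (x k)) \<and>
        norm (c (x k) + J (x k) *v v k)
          \<le> norm (c (x k) + J (x k) *v (- beta k *\<^sub>R (transpose (J (x k)) *v c (x k))))"
    \<comment> \<open>Step 2 (u k is the minimizer of the tangential subproblem; no termination)\<close>
    and step2: "\<And>k. J (x k) *v u k = 0 \<and>
        (\<forall>w. J (x k) *v w = 0 \<longrightarrow>
           g (x k) \<bullet> u k + (1 / (2 * alpha k)) * (norm (u k))^2 + r (x k + v k + u k)
           \<le> g (x k) \<bullet> w + (1 / (2 * alpha k)) * (norm w)^2 + r (x k + v k + w))"
    and no_term2: "\<And>k. v k + u k \<noteq> 0"
    \<comment> \<open>Step 3 (merit parameter update; tau_trial = infinity when D_k \<le> 0)\<close>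
    and step3: "\<And>k. let s = v k + u k;
        D = g (x k) \<bullet> s + (sigma_u + 1/2) * (norm s)^2 / alpha k + r (x k + s) - r (x k);
        tprev = (if k = 0 then tau_m1 else tau (k - 1));
        ttrial = (1 - sigma_c) * (norm (c (x k)) - norm (c (x k) + J (x k) *v v k)) / D
      in tau k = (if D \<le> 0 then tprev
                  else if tprev \<le> ttrial then tprev else min ((1 - eps_tau) * tprev) ttrial)"
    \<comment> \<open>Step 4 (acceptance test and step size update)\<close>
    and step4: "\<And>k. let s = v k + u k in
      (if merit (tau k) f r c (x k + s)
            \<le> merit (tau k) f r c (x k) - eta * model_red f g r c J (x k) (alpha k) s (tau k)
       then x (Suc k) = x k + s \<and> alpha (Suc k) = alpha k
       else x (Suc k) = x k \<and> alpha (Suc k) = xi * alpha k)"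
    \<comment> \<open>Standing assumption on the open convex set X\<close>
    and X: "open X" "convex X" "\<And>k. x k \<in> X" "\<And>k. x k + (v k + u k) \<in> X"
    and f_bdd_below: "\<exists>B. \<forall>y\<in>X. B \<le> f y"
    and g_bdd: "\<exists>B. \<forall>y\<in>X. norm (g y) \<le> B"
    and g_lip: "\<exists>L. \<forall>y\<in>X. \<forall>z\<in>X. norm (g y - g z) \<le> L * norm (y - z)"
    and c_bdd: "\<exists>B. \<forall>y\<in>X. norm (c y) \<le> B"
    and J_bdd: "\<exists>B. \<forall>y\<in>X. norm (J y) \<le> B"
    and J_lip: "\<exists>L. \<forall>y\<in>X. \<forall>z\<in>X. norm (J y - J z) \<le> L * norm (y - z)"
    and r_subgrad_bdd: "\<exists>B. \<forall>y\<in>X. \<forall>d. is_subgrad r y d \<longrightarrow> norm d \<le> B"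
  shows "\<exists>K :: nat \<Rightarrow> nat. strict_mono K \<and>
           (\<lambda>i. transpose (J (x (K i))) *v c (x (K i))) \<longlonglongrightarrow> 0"
proof -
  obtain f_low where f_low: "\<And>y. y \<in> X \<Longrightarrow> f_low \<le> f y"
    using f_bdd_below by blast
  obtain Bg where Bg: "\<And>y. y \<in> X \<Longrightarrow> norm (g y) \<le> Bg"
    using g_bdd by blast
  obtain Lg where Lg: "0 < Lg" "\<And>y z. y \<in> X \<Longrightarrow> z \<in> X \<Longrightarrow> norm (g y - g z) \<le> Lg * norm (y - z)"
    using ex_pos_Lipschitz_const[OF g_lip] by blast
  obtain Bc where Bc: "0 < Bc" "\<And>y. y \<in> X \<Longrightarrow> norm (c y) \<le> Bc"
    using ex_pos_bound[OF c_bdd] by blast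
  obtain BJ where BJ: "0 < BJ" "\<And>y. y \<in> X \<Longrightarrow> norm (J y) \<le> BJ"
    using ex_pos_bound[OF J_bdd] by blast
  obtain LJ where LJ: "0 < LJ" "\<And>y z. y \<in> X \<Longrightarrow> z \<in> X \<Longrightarrow> norm (J y - J z) \<le> LJ * norm (y - z)"
    using ex_pos_Lipschitz_const[OF J_lip] by blast
  obtain Br where Br: "\<And>y d. y \<in> X \<Longrightarrow> is_subgrad r y d \<Longrightarrow> norm d \<le> Br"
    using r_subgrad_bdd by blast
  interpret prox_sqp f g c J r X x v u alpha tau beta tau_m1 kappa_v sigma_c eps_tau xi eta sigma_u
      f_low Bg Lg Bc BJ LJ Br
    by (unfold_locales; fact f_deriv c_deriv r_nonneg r_convex params init step1_zero step1_beta
        step1_v step2 step3 step4 X f_low Bg Lg Bc BJ LJ Br)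
  show ?thesis
    by (rule subseq_JTc_tendsto_zero)
qed

end
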